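(* The class $\mathrm{TM}_r(d)$ is closed under ultraproducts and ultraroots. That is: (a) for every family $(G_i)_{i\in I}$ of graphs in $\mathrm{TM}_r(d)$ and every ultrafilter $U$ on $I$, the ultraproduct $\prod_{i\in I} G_i/U$ belongs to $\mathrm{TM}_r(d)$; and (b) for every graph $H$, if some ultrapower $\prod_{i\in I} H/U$ of $H$ (for an ultrafilter $U$ on an index set $I$) belongs to $\mathrm{TM}_r(d)$, then $H$ belongs to $\mathrm{TM}_r(d)$.
   Context: Graphs are simple undirected graphs (structures over an irreflexive symmetric binary relation $E$) of arbitrary cardinality. A tree model of $r$ labels and height $d$ is a pair $(t,S)$ where $t$ is an $(r+1)$-labeled rooted tree (a possibly infinite tree with a distinguished root whose nodes are partitioned into label classes $P_1,\dots,P_{r+1}$) and $S \subseteq [r]^2\times[d]$ such that: every root-to-leaf path has length exactly $d$; leaves are labeled from $[r]$ and internal nodes with $r+1$; $(i,j,l)\in S$ iff $(j,i,l)\in S$. It is a tree model of the graph whose vertices are the leaves of $t$, two leaves with labels $i,j$ at distance $2l$ in $t$ being adjacent iff $(i,j,l)\in S$. $\mathrm{TM}_r(d)$ is the class of all graphs isomorphic to a graph having such a tree model. The ultraproduct $\prod_{i\in I}A_i/U$ has as universe the classes of $\prod_i A_i$ under $\bar a\sim\bar b$ iff $\{i: a_i=b_i\}\in U$, with a relation holding on classes iff it holds coordinatewise on a set of indices in $U$; when all $A_i=A$ it is the ultrapower of $A$, and $A$ is its ultraroot. *)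

theory Defs
  imports Main "HOL-Library.FuncSet"
begin

type_synonym 'a graph = "'a set \<times> ('a \<Rightarrow> 'a \<Rightarrow> bool)"

definition is_graph :: "'a graph \<Rightarrow> bool" where
  "is_graph G \<longleftrightarrow>
     (\<forall>x y. snd G x y \<longrightarrow> x \<in> fst G \<and> y \<in> fst G) \<and>
     (\<forall>x. \<not> snd G x x) \<and>
     (\<forall>x y. snd G x y \<longrightarrow> snd G y x)"

definition graph_iso :: "'a graph \<Rightarrow> 'b graph \<Rightarrow> bool" where
  "graph_iso G H \<longleftrightarrow>
     (\<exists>f. bij_betw f (fst G) (fst H) \<and>
          (\<forall>x\<in>fst G. \<forall>y\<in>fst G. snd G x y \<longleftrightarrow> snd H (f x) (f y)))"

text \<open>A rooted tree is given by a node set N, a root rt and a parent map p: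
every non-root node has its parent in N, and every node reaches the root
after finitely many parent steps.  (The value of p at the root is irrelevant.)\<close>

definition rooted_tree :: "'n set \<Rightarrow> 'n \<Rightarrow> ('n \<Rightarrow> 'n) \<Rightarrow> bool" where
  "rooted_tree N rt p \<longleftrightarrow>
     rt \<in> N \<and> (\<forall>x\<in>N. x \<noteq> rt \<longrightarrow> p x \<in> N) \<and> (\<forall>x\<in>N. \<exists>k. (p ^^ k) x = rt)"

definition tree_leaf :: "'n set \<Rightarrow> 'n \<Rightarrow> ('n \<Rightarrow> 'n) \<Rightarrow> 'n \<Rightarrow> bool" where
  "tree_leaf N rt p x \<longleftrightarrow> x \<in> N \<and> \<not> (\<exists>y\<in>N. y \<noteq> rt \<and> p y = x)"

definition tree_depth :: "'n \<Rightarrow> ('n \<Rightarrow> 'n) \<Rightarrow> 'n \<Rightarrow> nat" where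
  "tree_depth rt p x = (LEAST k. (p ^^ k) x = rt)"

text \<open>Half of the tree distance between two leaves of the same depth: the
number of steps up to their least common ancestor.  For leaves u, v of depth d,
the distance in the tree is 2 * tree_half_dist p u v.\<close>

definition tree_half_dist :: "('n \<Rightarrow> 'n) \<Rightarrow> 'n \<Rightarrow> 'n \<Rightarrow> nat" where
  "tree_half_dist p u v = (LEAST k. (p ^^ k) u = (p ^^ k) v)"

definition tree_model ::
  "nat \<Rightarrow> nat \<Rightarrow> 'n set \<Rightarrow> 'n \<Rightarrow> ('n \<Rightarrow> 'n) \<Rightarrow> ('n \<Rightarrow> nat) \<Rightarrow> (nat \<times> nat \<times> nat) set \<Rightarrow> bool" where
  "tree_model r d N rt p lab S \<longleftrightarrow>
     rooted_tree N rt p \<and>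
     (\<forall>x\<in>N. tree_leaf N rt p x \<longrightarrow> tree_depth rt p x = d \<and> lab x \<in> {1..r}) \<and>
     (\<forall>x\<in>N. \<not> tree_leaf N rt p x \<longrightarrow> lab x = r + 1) \<and>
     S \<subseteq> {1..r} \<times> {1..r} \<times> {1..d} \<and>
     (\<forall>i j l. (i, j, l) \<in> S \<longleftrightarrow> (j, i, l) \<in> S)"

definition tm_graph ::
  "'n set \<Rightarrow> 'n \<Rightarrow> ('n \<Rightarrow> 'n) \<Rightarrow> ('n \<Rightarrow> nat) \<Rightarrow> (nat \<times> nat \<times> nat) set \<Rightarrow> 'n graph" where
  "tm_graph N rt p lab S =
     ({x. tree_leaf N rt p x},
      (\<lambda>u v. tree_leaf N rt p u \<and> tree_leaf N rt p v \<and>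
             (lab u, lab v, tree_half_dist p u v) \<in> S))"

text \<open>The node type of the tree is fixed to
'a set \<times> nat; this loses no generality: nodes without
leaf descendants can be pruned, and the remaining nodes are encoded by the
pair (set of leaves below, depth); infinite leafless trees use ({}, k).\<close>

definition in_TM :: "nat \<Rightarrow> nat \<Rightarrow> 'a graph \<Rightarrow> bool" where
  "in_TM r d G \<longleftrightarrow> is_graph G \<and>
     (\<exists>(N :: ('a set \<times> nat) set) rt p lab S.
        tree_model r d N rt p lab S \<and> graph_iso G (tm_graph N rt p lab S))"

definition ultrafilter_on :: "'i set \<Rightarrow> 'i set set \<Rightarrow> bool" where
  "ultrafilter_on I U \<longleftrightarrow>
     U \<subseteq> Pow I \<and> I \<in> U \<and> {} \<notin> U \<and>
     (\<forall>A B. A \<in> U \<longrightarrow> A \<subseteq> B \<longrightarrow> B \<subseteq> I \<longrightarrow> B \<in> U) \<and>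
     (\<forall>A\<in>U. \<forall>B\<in>U. A \<inter> B \<in> U) \<and>
     (\<forall>A. A \<subseteq> I \<longrightarrow> A \<in> U \<or> I - A \<in> U)"

definition ultra_equiv :: "'i set \<Rightarrow> 'i set set \<Rightarrow> ('i \<Rightarrow> 'a graph) \<Rightarrow> (('i \<Rightarrow> 'a) \<times> ('i \<Rightarrow> 'a)) set" where
  "ultra_equiv I U G =
     {(f, g). f \<in> (\<Pi>\<^sub>E i\<in>I. fst (G i)) \<and> g \<in> (\<Pi>\<^sub>E i\<in>I. fst (G i)) \<and> {i\<in>I. f i = g i} \<in> U}"

definition ultraproduct :: "'i set \<Rightarrow> 'i set set \<Rightarrow> ('i \<Rightarrow> 'a graph) \<Rightarrow> ('i \<Rightarrow> 'a) set graph" where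
  "ultraproduct I U G =
     ((\<Pi>\<^sub>E i\<in>I. fst (G i)) // ultra_equiv I U G,
      (\<lambda>X Y. X \<in> (\<Pi>\<^sub>E i\<in>I. fst (G i)) // ultra_equiv I U G \<and>
             Y \<in> (\<Pi>\<^sub>E i\<in>I. fst (G i)) // ultra_equiv I U G \<and>
             (\<exists>f\<in>X. \<exists>g\<in>Y. {i\<in>I. snd (G i) (f i) (g i)} \<in> U)))"

end

theory Submission
  imports Defs
begin

(* A graph lies in TM_r(d) exactly when its vertices carry labels in [r] and an ultrametric
   with values in {0..d} such that the adjacency of u and v depends only on their labels and
   their distance: half the tree distance of two leaves is such an ultrametric, and
   conversely the closed balls of such an ultrametric form a tree model.  Labels, distances
   and adjacency tables range over finite sets, so along an ultrafilter each of them is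
   eventually constant, and these limits equip an ultraproduct with the same kind of
   structure (a special case of Los's theorem).  An ultraroot embeds into its
   ultrapower as an induced subgraph via the diagonal map, and the structure restricts to
   induced subgraphs. *)

definition adjacency_table :: "nat \<Rightarrow> nat \<Rightarrow> (nat \<times> nat \<times> nat) set \<Rightarrow> bool" where
  "adjacency_table r d S \<longleftrightarrow>
     S \<subseteq> {1..r} \<times> {1..r} \<times> {1..d} \<and> (\<forall>i j l. (i, j, l) \<in> S \<longleftrightarrow> (j, i, l) \<in> S)"

lemma finite_adjacency_tables: "finite (Collect (adjacency_table r d))"
proof (rule finite_subset)
  show "Collect (adjacency_table r d) \<subseteq> Pow ({1..r} \<times> {1..r} \<times> {1..d})"
    unfolding adjacency_table_def by blast
qed simp

locale bounded_ultrametric =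
  fixes V :: "'a set" and d :: nat and \<delta> :: "'a \<Rightarrow> 'a \<Rightarrow> nat"
  assumes bounded: "\<lbrakk>u \<in> V; v \<in> V\<rbrakk> \<Longrightarrow> \<delta> u v \<le> d"
    and zero_iff: "\<lbrakk>u \<in> V; v \<in> V\<rbrakk> \<Longrightarrow> \<delta> u v = 0 \<longleftrightarrow> u = v"
    and commute: "\<lbrakk>u \<in> V; v \<in> V\<rbrakk> \<Longrightarrow> \<delta> u v = \<delta> v u"
    and ultra: "\<lbrakk>u \<in> V; v \<in> V; w \<in> V\<rbrakk> \<Longrightarrow> \<delta> u w \<le> max (\<delta> u v) (\<delta> v w)"

lemma (in bounded_ultrametric) bounded_ultrametric_comp:
  assumes "f ` W \<subseteq> V" and "inj_on f W"
  shows "bounded_ultrametric W d (\<lambda>x y. \<delta> (f x) (f y))"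
proof
  fix x y z assume "x \<in> W" "y \<in> W" "z \<in> W"
  then have "f x \<in> V" "f y \<in> V" "f z \<in> V" using assms(1) by auto
  then show "\<delta> (f x) (f y) \<le> d" "\<delta> (f x) (f y) = \<delta> (f y) (f x)"
    and "\<delta> (f x) (f z) \<le> max (\<delta> (f x) (f y)) (\<delta> (f y) (f z))"
    by (simp_all add: bounded commute ultra)
next
  fix x y assume "x \<in> W" "y \<in> W"
  moreover from this have "f x \<in> V" "f y \<in> V" using assms(1) by auto
  ultimately show "\<delta> (f x) (f y) = 0 \<longleftrightarrow> x = y"
    using assms(2) zero_iff by (auto simp: inj_on_def)
qed

definition ultrametric_model ::
  "nat \<Rightarrow> nat \<Rightarrow> 'a graph \<Rightarrow> ('a \<Rightarrow> nat) \<Rightarrow> ('a \<Rightarrow> 'a \<Rightarrow> nat) \<Rightarrow> (nat \<times> nat \<times> nat) set \<Rightarrow> bool" where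
  "ultrametric_model r d G lab \<delta> S \<longleftrightarrow>
     adjacency_table r d S \<and> lab ` fst G \<subseteq> {1..r} \<and> bounded_ultrametric (fst G) d \<delta> \<and>
     (\<forall>u\<in>fst G. \<forall>v\<in>fst G. snd G u v \<longleftrightarrow> (lab u, lab v, \<delta> u v) \<in> S)"

lemma ultrametric_model_is_graph:
  assumes model: "ultrametric_model r d G lab \<delta> S"
    and edges: "\<And>x y. snd G x y \<Longrightarrow> x \<in> fst G \<and> y \<in> fst G"
  shows "is_graph G"
proof -
  interpret bounded_ultrametric "fst G" d \<delta>
    using model by (simp add: ultrametric_model_def)
  have S: "adjacency_table r d S"
    and E: "\<And>u v. \<lbrakk>u \<in> fst G; v \<in> fst G\<rbrakk> \<Longrightarrow> snd G u v \<longleftrightarrow> (lab u, lab v, \<delta> u v) \<in> S"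
    using model by (auto simp: ultrametric_model_def)
  show ?thesis
    unfolding is_graph_def
  proof (intro conjI allI impI notI)
    fix x y assume "snd G x y"
    then show "x \<in> fst G" "y \<in> fst G" using edges by auto
  next
    fix x assume "snd G x x"
    then have "x \<in> fst G" and "(lab x, lab x, \<delta> x x) \<in> S" using edges E by blast+
    then have "(lab x, lab x, 0) \<in> S" using zero_iff[of x x] by simp
    then show False using S by (auto simp: adjacency_table_def dest: subsetD)
  next
    fix x y assume xy: "snd G x y"
    then have "x \<in> fst G" "y \<in> fst G" using edges by blast+
    moreover from this xy have "(lab x, lab y, \<delta> x y) \<in> S" using E by blast
    ultimately show "snd G y x" using S E commute by (simp add: adjacency_table_def)
  qed
qed

lemma ultrametric_model_pullback:
  assumes model: "ultrametric_model r d G lab \<delta> S"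
    and f: "f ` fst H \<subseteq> fst G" "inj_on f (fst H)"
    and edges: "\<And>x y. \<lbrakk>x \<in> fst H; y \<in> fst H\<rbrakk> \<Longrightarrow> snd H x y \<longleftrightarrow> snd G (f x) (f y)"
  shows "ultrametric_model r d H (lab \<circ> f) (\<lambda>x y. \<delta> (f x) (f y)) S"
proof -
  interpret bounded_ultrametric "fst G" d \<delta>
    using model by (simp add: ultrametric_model_def)
  show ?thesis
    using model f edges bounded_ultrametric_comp[OF f]
    by (auto simp: ultrametric_model_def image_subset_iff)
qed

section \<open>Tree models yield ultrametric models\<close>

lemma funpow_eq_mono:
  fixes p :: "'a \<Rightarrow> 'a"
  assumes "(p ^^ a) u = (p ^^ a) v" and "a \<le> m"
  shows "(p ^^ m) u = (p ^^ m) v"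
proof -
  have "p ^^ m = p ^^ (m - a) \<circ> p ^^ a"
    using assms(2) by (simp flip: funpow_add)
  with assms(1) show ?thesis by simp
qed

lemma tree_half_dist_le: "(p ^^ k) u = (p ^^ k) v \<Longrightarrow> tree_half_dist p u v \<le> k"
  unfolding tree_half_dist_def by (rule Least_le)

lemma funpow_tree_half_dist:
  "(p ^^ k) u = (p ^^ k) v \<Longrightarrow> (p ^^ tree_half_dist p u v) u = (p ^^ tree_half_dist p u v) v"
  unfolding tree_half_dist_def by (rule LeastI)

lemma bounded_ultrametric_tree_half_dist:
  assumes "\<And>u. u \<in> W \<Longrightarrow> (p ^^ d) u = c"
  shows "bounded_ultrametric W d (tree_half_dist p)"
proof
  fix u v assume "u \<in> W" "v \<in> W"
  then have uv: "(p ^^ d) u = (p ^^ d) v" using assms by simp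
  show "tree_half_dist p u v \<le> d" using uv by (rule tree_half_dist_le)
  show "tree_half_dist p u v = 0 \<longleftrightarrow> u = v"
    using funpow_tree_half_dist[OF uv] by (auto simp: tree_half_dist_def)
  show "tree_half_dist p u v = tree_half_dist p v u"
    by (simp add: tree_half_dist_def eq_commute)
next
  fix u v w assume "u \<in> W" "v \<in> W" "w \<in> W"
  then have uv: "(p ^^ d) u = (p ^^ d) v" and vw: "(p ^^ d) v = (p ^^ d) w" using assms by simp_all
  define m where "m = max (tree_half_dist p u v) (tree_half_dist p v w)"
  have "(p ^^ m) u = (p ^^ m) v" "(p ^^ m) v = (p ^^ m) w"
    using funpow_eq_mono[OF funpow_tree_half_dist[OF uv]] funpow_eq_mono[OF funpow_tree_half_dist[OF vw]]
    by (simp_all add: m_def)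
  then show "tree_half_dist p u w \<le> m" by (intro tree_half_dist_le) simp
qed

lemma funpow_leaf_eq_root:
  assumes "tree_model r d N rt p lab S" and "tree_leaf N rt p u"
  shows "(p ^^ d) u = rt"
proof -
  have "u \<in> N" using assms(2) by (simp add: tree_leaf_def)
  with assms have reach: "\<exists>k. (p ^^ k) u = rt" and depth: "tree_depth rt p u = d"
    unfolding tree_model_def rooted_tree_def by blast+
  from reach have "(p ^^ (LEAST k. (p ^^ k) u = rt)) u = rt" by (rule LeastI_ex)
  with depth show ?thesis by (simp add: tree_depth_def)
qed

lemma ultrametric_model_tm_graph:
  assumes tm: "tree_model r d N rt p lab S"
  shows "ultrametric_model r d (tm_graph N rt p lab S) lab (tree_half_dist p) S"
proof -
  have "bounded_ultrametric {x. tree_leaf N rt p x} d (tree_half_dist p)"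
    by (rule bounded_ultrametric_tree_half_dist) (use funpow_leaf_eq_root[OF tm] in blast)
  with tm show ?thesis
    by (auto simp: ultrametric_model_def tm_graph_def tree_model_def adjacency_table_def tree_leaf_def)
qed

lemma in_TM_imp_ultrametric_model:
  assumes "in_TM r d G"
  obtains lab \<delta> S where "ultrametric_model r d G lab \<delta> S"
proof -
  obtain N :: "('a set \<times> nat) set" and rt p lab S f
    where tm: "tree_model r d N rt p lab S"
      and f: "bij_betw f (fst G) (fst (tm_graph N rt p lab S))"
      and edges: "\<forall>x\<in>fst G. \<forall>y\<in>fst G. snd G x y \<longleftrightarrow> snd (tm_graph N rt p lab S) (f x) (f y)"
    using assms unfolding in_TM_def graph_iso_def by blast
  show ?thesis
    by (rule that, rule ultrametric_model_pullback[OF ultrametric_model_tm_graph[OF tm]])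
      (use f edges in \<open>auto simp: bij_betw_def\<close>)
qed

section \<open>The balls of an ultrametric form a tree model\<close>

context bounded_ultrametric
begin

definition ball :: "'a \<Rightarrow> nat \<Rightarrow> 'a set" where
  "ball v k = {w \<in> V. \<delta> v w \<le> k}"

(* The node (B, j) is a ball B of radius d - j at depth j; its parent is the ball of radius
   d - j + 1 around any point of B. *)

definition ball_nodes :: "('a set \<times> nat) set" where
  "ball_nodes = {(ball v (d - j), j) | v j. v \<in> V \<and> j \<le> d}"

definition ball_parent :: "'a set \<times> nat \<Rightarrow> 'a set \<times> nat" where
  "ball_parent x = ((\<Union>v\<in>fst x. ball v (Suc (d - snd x))), snd x - 1)"

lemma centre_in_ball: "v \<in> V \<Longrightarrow> v \<in> ball v k"
  unfolding ball_def using zero_iff[of v v] by simp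

lemma ball_eq_ball_iff:
  assumes "u \<in> V" "v \<in> V"
  shows "ball u k = ball v k \<longleftrightarrow> \<delta> u v \<le> k"
proof
  assume "ball u k = ball v k"
  then have "v \<in> ball u k" using centre_in_ball[OF assms(2)] by simp
  then show "\<delta> u v \<le> k" unfolding ball_def by simp
next
  assume uv: "\<delta> u v \<le> k"
  have "\<delta> u w \<le> k \<longleftrightarrow> \<delta> v w \<le> k" if "w \<in> V" for w
    using ultra[OF assms that] ultra[OF assms(2,1) that] commute[OF assms] uv by auto
  then show "ball u k = ball v k" unfolding ball_def by auto
qed

lemma ball_radius_d: "v \<in> V \<Longrightarrow> ball v d = V"
  unfolding ball_def using bounded by auto

lemma ball_radius_0: "v \<in> V \<Longrightarrow> ball v 0 = {v}"
  unfolding ball_def using zero_iff by auto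

lemma Union_ball_Suc:
  assumes "v \<in> V"
  shows "(\<Union>w\<in>ball v k. ball w (Suc k)) = ball v (Suc k)"
proof
  show "ball v (Suc k) \<subseteq> (\<Union>w\<in>ball v k. ball w (Suc k))"
    using centre_in_ball[OF assms] by blast
  show "(\<Union>w\<in>ball v k. ball w (Suc k)) \<subseteq> ball v (Suc k)"
    using ultra[OF assms] unfolding ball_def by fastforce
qed

lemma ball_parent_ball:
  assumes "v \<in> V" "0 < j" "j \<le> d"
  shows "ball_parent (ball v (d - j), j) = (ball v (d - (j - 1)), j - 1)"
  using Union_ball_Suc[OF assms(1), of "d - j"] assms(2,3)
  by (simp add: ball_parent_def Suc_diff_le)

lemma funpow_ball_parent:
  assumes "v \<in> V" "k \<le> j" "j \<le> d"
  shows "(ball_parent ^^ k) (ball v (d - j), j) = (ball v (d - (j - k)), j - k)"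
  using assms(2)
proof (induction k)
  case (Suc k)
  then show ?case
    using ball_parent_ball[OF assms(1), of "j - k"] assms(3) by (simp add: Suc_diff_Suc diff_diff_add)
qed simp

lemma funpow_ball_parent_leaf:
  "\<lbrakk>v \<in> V; k \<le> d\<rbrakk> \<Longrightarrow> (ball_parent ^^ k) ({v}, d) = (ball v k, d - k)"
  using funpow_ball_parent[of v k d] ball_radius_0 by simp

lemma rooted_tree_ball_nodes:
  assumes "v\<^sub>0 \<in> V"
  shows "rooted_tree ball_nodes (V, 0) ball_parent"
  unfolding rooted_tree_def
proof (intro conjI ballI impI)
  show "(V, 0) \<in> ball_nodes"
    unfolding ball_nodes_def using assms ball_radius_d[OF assms] by force
next
  fix x assume "x \<in> ball_nodes" and "x \<noteq> (V, 0)"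
  then obtain v j where x: "x = (ball v (d - j), j)" and v: "v \<in> V" and "j \<le> d" "j \<noteq> 0"
    unfolding ball_nodes_def using ball_radius_d by fastforce
  then show "ball_parent x \<in> ball_nodes"
    unfolding ball_nodes_def using ball_parent_ball[OF v] by fastforce
next
  fix x assume "x \<in> ball_nodes"
  then obtain v j where x: "x = (ball v (d - j), j)" and v: "v \<in> V" and j: "j \<le> d"
    unfolding ball_nodes_def by blast
  then have "(ball_parent ^^ j) x = (V, 0)"
    using funpow_ball_parent[OF v order.refl j] ball_radius_d[OF v] by simp
  then show "\<exists>k. (ball_parent ^^ k) x = (V, 0)" by blast
qed

lemma tree_leaf_ball_nodes_iff:
  "tree_leaf ball_nodes (V, 0) ball_parent x \<longleftrightarrow> (\<exists>v\<in>V. x = ({v}, d))"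
proof
  assume leaf: "tree_leaf ball_nodes (V, 0) ball_parent x"
  then obtain v j where x: "x = (ball v (d - j), j)" and v: "v \<in> V" and j: "j \<le> d"
    unfolding tree_leaf_def ball_nodes_def by blast
  have "j = d"
  proof (rule ccontr)
    assume "j \<noteq> d"
    then have "(ball v (d - Suc j), Suc j) \<in> ball_nodes"
      and "ball_parent (ball v (d - Suc j), Suc j) = x"
      using j v x ball_parent_ball[OF v, of "Suc j"] unfolding ball_nodes_def by auto
    with leaf show False unfolding tree_leaf_def by blast
  qed
  with x v show "\<exists>v\<in>V. x = ({v}, d)" using ball_radius_0 by auto
next
  assume "\<exists>v\<in>V. x = ({v}, d)"
  then obtain v where v: "v \<in> V" and x: "x = ({v}, d)" by blast
  have depth_le: "snd y \<le> d" if "y \<in> ball_nodes" for y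
    using that unfolding ball_nodes_def by auto
  have "x \<in> ball_nodes"
    unfolding ball_nodes_def using v x ball_radius_0[OF v] by force
  moreover have "ball_parent y \<noteq> x" if "y \<in> ball_nodes" "y \<noteq> (V, 0)" for y
    using that depth_le ball_radius_d unfolding ball_parent_def ball_nodes_def x by fastforce
  ultimately show "tree_leaf ball_nodes (V, 0) ball_parent x"
    unfolding tree_leaf_def by blast
qed

lemma tree_depth_leaf:
  assumes v: "v \<in> V"
  shows "tree_depth (V, 0) ball_parent ({v}, d) = d"
  unfolding tree_depth_def
proof (rule Least_equality)
  show "(ball_parent ^^ d) ({v}, d) = (V, 0)"
    using funpow_ball_parent_leaf[OF v] ball_radius_d[OF v] by simp
  show "d \<le> k" if "(ball_parent ^^ k) ({v}, d) = (V, 0)" for k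
    using that funpow_ball_parent_leaf[OF v, of k] by (cases "k \<le> d") auto
qed

lemma tree_half_dist_leaves:
  assumes "u \<in> V" "v \<in> V"
  shows "tree_half_dist ball_parent ({u}, d) ({v}, d) = \<delta> u v"
  unfolding tree_half_dist_def
proof (rule Least_equality)
  show "(ball_parent ^^ \<delta> u v) ({u}, d) = (ball_parent ^^ \<delta> u v) ({v}, d)"
    using funpow_ball_parent_leaf assms bounded[OF assms] ball_eq_ball_iff[OF assms] by simp
  show "\<delta> u v \<le> k" if "(ball_parent ^^ k) ({u}, d) = (ball_parent ^^ k) ({v}, d)" for k
  proof (cases "k \<le> d")
    case True
    with that show ?thesis
      using funpow_ball_parent_leaf assms ball_eq_ball_iff[OF assms] by simp
  qed (use bounded[OF assms] in simp)
qed

end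

lemma (in bounded_ultrametric) tree_model_ball_nodes:
  assumes "v\<^sub>0 \<in> V" and lab: "lab ` V \<subseteq> {1..r}" and S: "adjacency_table r d S"
  shows "tree_model r d ball_nodes (V, 0) ball_parent
           (\<lambda>x. if snd x = d then lab (the_elem (fst x)) else r + 1) S"
  unfolding tree_model_def
proof (intro conjI ballI impI)
  show "rooted_tree ball_nodes (V, 0) ball_parent"
    using assms(1) by (rule rooted_tree_ball_nodes)
  show "S \<subseteq> {1..r} \<times> {1..r} \<times> {1..d}" "\<forall>i j l. (i, j, l) \<in> S \<longleftrightarrow> (j, i, l) \<in> S"
    using S by (simp_all add: adjacency_table_def)
next
  fix x assume "tree_leaf ball_nodes (V, 0) ball_parent x"
  then obtain v where "v \<in> V" "x = ({v}, d)" using tree_leaf_ball_nodes_iff by blast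
  then show "tree_depth (V, 0) ball_parent x = d"
    and "(if snd x = d then lab (the_elem (fst x)) else r + 1) \<in> {1..r}"
    using tree_depth_leaf lab by auto
next
  fix x assume "x \<in> ball_nodes" and "\<not> tree_leaf ball_nodes (V, 0) ball_parent x"
  then have "snd x \<noteq> d"
    using tree_leaf_ball_nodes_iff ball_radius_0 unfolding ball_nodes_def by force
  then show "(if snd x = d then lab (the_elem (fst x)) else r + 1) = r + 1" by simp
qed

lemma in_TM_empty:
  assumes "is_graph G" and "fst G = {}"
  shows "in_TM r d G"
proof -
  \<comment> \<open>every leaf of a tree model has depth \<open>d\<close>, so the empty graph needs a leafless tree\<close>
  define N :: "('a set \<times> nat) set" where "N = range (\<lambda>k. ({}, k))"
  define p :: "'a set \<times> nat \<Rightarrow> 'a set \<times> nat" where "p x = (fst x, snd x - 1)" for x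
  have no_leaf: "\<not> tree_leaf N ({}, 0) p x" for x
  proof
    assume "tree_leaf N ({}, 0) p x"
    moreover from this obtain k where "x = ({}, k)" unfolding tree_leaf_def N_def by blast
    then have "({}, Suc k) \<in> N" "p ({}, Suc k) = x" by (simp_all add: N_def p_def)
    ultimately show False unfolding tree_leaf_def by blast
  qed
  have "(p ^^ k) ({}, n) = ({}, n - k)" for k n
    by (induction k) (simp_all add: p_def)
  then have "rooted_tree N ({}, 0) p"
    unfolding rooted_tree_def N_def by (auto simp: p_def)
  then have tm: "tree_model r d N ({}, 0) p (\<lambda>_. r + 1) {}"
    unfolding tree_model_def using no_leaf by blast
  have "graph_iso G (tm_graph N ({}, 0) p (\<lambda>_. r + 1) {})"
    using assms(2) no_leaf unfolding graph_iso_def tm_graph_def by (simp add: bij_betw_def)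
  with assms(1) tm show ?thesis unfolding in_TM_def by blast
qed

lemma ultrametric_model_imp_in_TM:
  assumes graph: "is_graph G" and model: "ultrametric_model r d G lab \<delta> S"
  shows "in_TM r d G"
proof (cases "fst G = {}")
  case True
  with graph show ?thesis by (rule in_TM_empty)
next
  case False
  then obtain v\<^sub>0 where v\<^sub>0: "v\<^sub>0 \<in> fst G" by blast
  interpret bounded_ultrametric "fst G" d \<delta>
    using model by (simp add: ultrametric_model_def)
  define lab' where "lab' x = (if snd x = d then lab (the_elem (fst x)) else r + 1)" for x
  let ?T = "tm_graph ball_nodes (fst G, 0) ball_parent lab' S"
  have tm: "tree_model r d ball_nodes (fst G, 0) ball_parent lab' S"
    unfolding lab'_def using v\<^sub>0 model by (intro tree_model_ball_nodes) (auto simp: ultrametric_model_def)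
  have "bij_betw (\<lambda>v. ({v}, d)) (fst G) (fst ?T)"
    unfolding bij_betw_def inj_on_def tm_graph_def using tree_leaf_ball_nodes_iff by auto
  moreover have "snd G u v \<longleftrightarrow> snd ?T ({u}, d) ({v}, d)" if "u \<in> fst G" "v \<in> fst G" for u v
    using that model tree_leaf_ball_nodes_iff tree_half_dist_leaves
    by (simp add: tm_graph_def lab'_def ultrametric_model_def)
  ultimately have "graph_iso G ?T"
    unfolding graph_iso_def by blast
  with graph tm show ?thesis unfolding in_TM_def by blast
qed

lemma in_TM_iff_ultrametric_model:
  "in_TM r d G \<longleftrightarrow> is_graph G \<and> (\<exists>lab \<delta> S. ultrametric_model r d G lab \<delta> S)"
  by (metis in_TM_def in_TM_imp_ultrametric_model ultrametric_model_imp_in_TM)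

section \<open>Limits along an ultrafilter\<close>

lemma ultrafilter_onD:
  assumes "ultrafilter_on I U"
  shows "I \<in> U" and "{} \<notin> U"
    and "\<And>A B. \<lbrakk>A \<in> U; A \<subseteq> B; B \<subseteq> I\<rbrakk> \<Longrightarrow> B \<in> U"
    and "\<And>A B. \<lbrakk>A \<in> U; B \<in> U\<rbrakk> \<Longrightarrow> A \<inter> B \<in> U"
    and "\<And>A. A \<subseteq> I \<Longrightarrow> A \<in> U \<or> I - A \<in> U"
    and "\<And>A. A \<in> U \<Longrightarrow> A \<subseteq> I"
  using assms unfolding ultrafilter_on_def by blast+

definition filter_of :: "'i set set \<Rightarrow> 'i filter" where
  "filter_of U = (INF A\<in>U. principal A)"

lemma eventually_filter_of:
  assumes "ultrafilter_on I U"
  shows "eventually P (filter_of U) \<longleftrightarrow> {i \<in> I. P i} \<in> U"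
proof -
  note uf = ultrafilter_onD[OF assms]
  have "eventually P (filter_of U) \<longleftrightarrow> (\<exists>A\<in>U. \<forall>i\<in>A. P i)"
    unfolding filter_of_def
  proof (subst eventually_INF_base)
    show "U \<noteq> {}" using uf(1) by blast
    show "\<exists>C\<in>U. principal C \<le> inf (principal A) (principal B)" if "A \<in> U" "B \<in> U" for A B
      using uf(4)[OF that] by auto
  qed (simp add: eventually_principal)
  also have "\<dots> \<longleftrightarrow> {i \<in> I. P i} \<in> U"
  proof
    assume "\<exists>A\<in>U. \<forall>i\<in>A. P i"
    then obtain A where "A \<in> U" "\<forall>i\<in>A. P i" by blast
    moreover have "A \<subseteq> I" using uf(6) \<open>A \<in> U\<close> .
    ultimately have "A \<subseteq> {i \<in> I. P i}" by blast
    then show "{i \<in> I. P i} \<in> U" using uf(3)[OF \<open>A \<in> U\<close>] by simp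
  next
    assume "{i \<in> I. P i} \<in> U"
    then show "\<exists>A\<in>U. \<forall>i\<in>A. P i" by (rule bexI[rotated]) simp
  qed
  finally show ?thesis .
qed

lemma eventually_mem_filter_of:
  assumes "ultrafilter_on I U"
  shows "eventually (\<lambda>i. i \<in> I) (filter_of U)"
  using ultrafilter_onD(1)[OF assms] unfolding eventually_filter_of[OF assms] by simp

locale ultrafilter =
  fixes F :: "'a filter"
  assumes proper: "F \<noteq> bot"
    and eventually_or_not: "eventually P F \<or> eventually (\<lambda>x. \<not> P x) F"

lemma ultrafilter_filter_of:
  assumes "ultrafilter_on I U"
  shows "ultrafilter (filter_of U)"
proof
  have "\<not> eventually (\<lambda>i. False) (filter_of U)"
    using ultrafilter_onD(2)[OF assms] unfolding eventually_filter_of[OF assms] by simp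
  then show "filter_of U \<noteq> bot" by auto
  fix P
  have "I - {i \<in> I. P i} = {i \<in> I. \<not> P i}" by blast
  then show "eventually P (filter_of U) \<or> eventually (\<lambda>i. \<not> P i) (filter_of U)"
    using ultrafilter_onD(5)[OF assms, of "{i \<in> I. P i}"] unfolding eventually_filter_of[OF assms]
    by (simp only: Collect_subset simp_thms)
qed

context ultrafilter
begin

declare proper [simp]

lemma eventually_finite_range:
  assumes "finite A" and "eventually (\<lambda>x. h x \<in> A) F"
  shows "\<exists>a\<in>A. eventually (\<lambda>x. h x = a) F"
  using assms
proof (induction A rule: finite_induct)
  case (insert a A)
  from eventually_or_not[of "\<lambda>x. h x = a"] show ?case
  proof
    assume "eventually (\<lambda>x. h x \<noteq> a) F"
    with insert.prems have "eventually (\<lambda>x. h x \<in> A) F" by eventually_elim auto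
    with insert.IH show ?thesis by blast
  qed blast
qed simp

definition ulim :: "('a \<Rightarrow> 'b) \<Rightarrow> 'b" where
  "ulim h = (SOME a. eventually (\<lambda>x. h x = a) F)"

lemma eventually_eq_ulim:
  assumes "finite A" and "eventually (\<lambda>x. h x \<in> A) F"
  shows "eventually (\<lambda>x. h x = ulim h) F"
  using eventually_finite_range[OF assms] unfolding ulim_def by (metis someI_ex)

lemma ulim_in:
  assumes "finite A" and "eventually (\<lambda>x. h x \<in> A) F"
  shows "ulim h \<in> A"
proof -
  from eventually_eq_ulim[OF assms] assms(2) have "eventually (\<lambda>x. ulim h \<in> A) F"
    by eventually_elim auto
  then show ?thesis by simp
qed

lemma bounded_ultrametric_limit:
  assumes um: "eventually (\<lambda>i. bounded_ultrametric (V i) d (\<delta> i)) F"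
    and rep_in: "\<And>w. w \<in> W \<Longrightarrow> eventually (\<lambda>i. rep w i \<in> V i) F"
    and rep_eq_iff: "\<And>w w'. \<lbrakk>w \<in> W; w' \<in> W\<rbrakk> \<Longrightarrow> w = w' \<longleftrightarrow> eventually (\<lambda>i. rep w i = rep w' i) F"
    and lim: "\<And>w w'. \<lbrakk>w \<in> W; w' \<in> W\<rbrakk> \<Longrightarrow> eventually (\<lambda>i. \<delta> i (rep w i) (rep w' i) = D w w') F"
  shows "bounded_ultrametric W d D"
proof
  fix u v assume u: "u \<in> W" and v: "v \<in> W"
  from um rep_in[OF u] rep_in[OF v] lim[OF u v]
  have "eventually (\<lambda>i. D u v \<le> d) F"
    by eventually_elim (use bounded_ultrametric.bounded in metis)
  then show "D u v \<le> d" by simp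
  from um rep_in[OF u] rep_in[OF v] lim[OF u v] lim[OF v u]
  have "eventually (\<lambda>i. D u v = D v u) F"
    by eventually_elim (use bounded_ultrametric.commute in metis)
  then show "D u v = D v u" by simp
  from um rep_in[OF u] rep_in[OF v] lim[OF u v]
  have "eventually (\<lambda>i. D u v = 0 \<longleftrightarrow> rep u i = rep v i) F"
    by eventually_elim (use bounded_ultrametric.zero_iff in metis)
  then have "eventually (\<lambda>i. D u v = 0) F \<longleftrightarrow> eventually (\<lambda>i. rep u i = rep v i) F"
    by (rule eventually_subst)
  then show "D u v = 0 \<longleftrightarrow> u = v" using rep_eq_iff[OF u v] by simp
next
  fix u v w assume u: "u \<in> W" and v: "v \<in> W" and w: "w \<in> W"
  from um rep_in[OF u] rep_in[OF v] rep_in[OF w] lim[OF u v] lim[OF v w] lim[OF u w]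
  have "eventually (\<lambda>i. D u w \<le> max (D u v) (D v w)) F"
    by eventually_elim (use bounded_ultrametric.ultra in metis)
  then show "D u w \<le> max (D u v) (D v w)" by simp
qed

end

section \<open>Ultraproducts and ultraroots\<close>

locale graph_ultraproduct =
  fixes I :: "'i set" and U :: "'i set set" and G :: "'i \<Rightarrow> 'a graph"
  assumes ultrafilter_on_I: "ultrafilter_on I U"
begin

sublocale ultrafilter "filter_of U"
  using ultrafilter_on_I by (rule ultrafilter_filter_of)

abbreviation product_carrier :: "('i \<Rightarrow> 'a) set" where
  "product_carrier \<equiv> \<Pi>\<^sub>E i\<in>I. fst (G i)"

lemma ultra_equiv_iff:
  "(f, g) \<in> ultra_equiv I U G \<longleftrightarrow>
     f \<in> product_carrier \<and> g \<in> product_carrier \<and> (\<forall>\<^sub>F i in filter_of U. f i = g i)"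
  unfolding ultra_equiv_def eventually_filter_of[OF ultrafilter_on_I] by simp

lemma equiv_ultra_equiv: "equiv product_carrier (ultra_equiv I U G)"
proof (rule equivI)
  show "ultra_equiv I U G \<subseteq> product_carrier \<times> product_carrier"
    using ultra_equiv_iff by auto
  show "refl_on product_carrier (ultra_equiv I U G)"
    using ultra_equiv_iff by (auto simp: refl_on_def)
  show "sym (ultra_equiv I U G)"
    using ultra_equiv_iff by (auto simp: sym_def eq_commute)
  show "trans (ultra_equiv I U G)"
    unfolding trans_def ultra_equiv_iff by (auto elim: eventually_elim2)
qed

lemma vertices_ultraproduct: "fst (ultraproduct I U G) = product_carrier // ultra_equiv I U G"
  by (simp add: ultraproduct_def)

lemma edge_ultraproduct_imp_vertices:
  "snd (ultraproduct I U G) X Y \<Longrightarrow> X \<in> fst (ultraproduct I U G) \<and> Y \<in> fst (ultraproduct I U G)"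
  by (simp add: ultraproduct_def)

definition rep :: "('i \<Rightarrow> 'a) set \<Rightarrow> 'i \<Rightarrow> 'a" where
  "rep X = (SOME f. f \<in> X)"

lemma rep_in: "X \<in> fst (ultraproduct I U G) \<Longrightarrow> rep X \<in> X"
  unfolding rep_def vertices_ultraproduct
  using in_quotient_imp_non_empty[OF equiv_ultra_equiv] by (simp add: some_in_eq)

lemma eventually_rep_in:
  assumes "X \<in> fst (ultraproduct I U G)"
  shows "\<forall>\<^sub>F i in filter_of U. rep X i \<in> fst (G i)"
proof -
  have "rep X \<in> product_carrier"
    using rep_in[OF assms] in_quotient_imp_subset[OF equiv_ultra_equiv] assms
    unfolding vertices_ultraproduct by blast
  with eventually_mem_filter_of[OF ultrafilter_on_I] show ?thesis
    by (auto elim: eventually_mono)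
qed

lemma eventually_eq_rep:
  assumes "X \<in> fst (ultraproduct I U G)" and "f \<in> X"
  shows "\<forall>\<^sub>F i in filter_of U. f i = rep X i"
  using in_quotient_imp_in_rel[OF equiv_ultra_equiv, of X f "rep X"] assms rep_in[OF assms(1)]
  unfolding vertices_ultraproduct ultra_equiv_iff by simp

lemma ultraproduct_eq_iff:
  assumes "X \<in> fst (ultraproduct I U G)" and "Y \<in> fst (ultraproduct I U G)"
  shows "X = Y \<longleftrightarrow> (\<forall>\<^sub>F i in filter_of U. rep X i = rep Y i)"
  using quotient_eq_iff[OF equiv_ultra_equiv _ _ rep_in[OF assms(1)] rep_in[OF assms(2)]] assms
    in_quotient_imp_subset[OF equiv_ultra_equiv] rep_in[OF assms(1)] rep_in[OF assms(2)]
  unfolding vertices_ultraproduct ultra_equiv_iff by blast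

lemma ultraproduct_edge_iff:
  assumes X: "X \<in> fst (ultraproduct I U G)" and Y: "Y \<in> fst (ultraproduct I U G)"
  shows "snd (ultraproduct I U G) X Y \<longleftrightarrow> (\<forall>\<^sub>F i in filter_of U. snd (G i) (rep X i) (rep Y i))"
proof -
  have "snd (ultraproduct I U G) X Y \<longleftrightarrow>
      (\<exists>f\<in>X. \<exists>g\<in>Y. \<forall>\<^sub>F i in filter_of U. snd (G i) (f i) (g i))"
    using X Y unfolding vertices_ultraproduct
    by (simp add: ultraproduct_def eventually_filter_of[OF ultrafilter_on_I])
  also have "\<dots> \<longleftrightarrow> (\<forall>\<^sub>F i in filter_of U. snd (G i) (rep X i) (rep Y i))"
  proof
    assume "\<exists>f\<in>X. \<exists>g\<in>Y. \<forall>\<^sub>F i in filter_of U. snd (G i) (f i) (g i)"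
    then obtain f g where "f \<in> X" "g \<in> Y" and "\<forall>\<^sub>F i in filter_of U. snd (G i) (f i) (g i)"
      by blast
    from this(3) eventually_eq_rep[OF X this(1)] eventually_eq_rep[OF Y this(2)]
    show "\<forall>\<^sub>F i in filter_of U. snd (G i) (rep X i) (rep Y i)"
      by eventually_elim simp
  qed (use rep_in[OF X] rep_in[OF Y] in blast)
  finally show ?thesis .
qed

end

context graph_ultraproduct
begin

lemma ultrametric_model_ultraproduct:
  assumes models: "\<And>i. i \<in> I \<Longrightarrow> ultrametric_model r d (G i) (lab i) (\<delta> i) (S i)"
  shows "ultrametric_model r d (ultraproduct I U G)
           (\<lambda>X. ulim (\<lambda>i. lab i (rep X i))) (\<lambda>X Y. ulim (\<lambda>i. \<delta> i (rep X i) (rep Y i))) (ulim S)"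
    (is "ultrametric_model r d ?G ?lab ?\<delta> (ulim S)")
proof -
  have ev_model: "\<forall>\<^sub>F i in filter_of U. ultrametric_model r d (G i) (lab i) (\<delta> i) (S i)"
    using eventually_mem_filter_of[OF ultrafilter_on_I] by (rule eventually_mono) (rule models)
  have ev_table: "\<forall>\<^sub>F i in filter_of U. S i \<in> Collect (adjacency_table r d)"
    using ev_model by eventually_elim (simp add: ultrametric_model_def)
  have ev_lab: "\<forall>\<^sub>F i in filter_of U. lab i (rep X i) \<in> {1..r}" if "X \<in> fst ?G" for X
    using ev_model eventually_rep_in[OF that] by eventually_elim (auto simp: ultrametric_model_def)
  have ev_\<delta>: "\<forall>\<^sub>F i in filter_of U. \<delta> i (rep X i) (rep Y i) \<in> {0..d}"
    if "X \<in> fst ?G" "Y \<in> fst ?G" for X Y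
    using ev_model eventually_rep_in[OF that(1)] eventually_rep_in[OF that(2)]
    by eventually_elim (auto simp: ultrametric_model_def bounded_ultrametric.bounded)
  note lim_table = eventually_eq_ulim[OF finite_adjacency_tables ev_table]
  note lim_lab = eventually_eq_ulim[OF finite_atLeastAtMost ev_lab]
  note lim_\<delta> = eventually_eq_ulim[OF finite_atLeastAtMost ev_\<delta>]
  have "adjacency_table r d (ulim S)"
    using ulim_in[OF finite_adjacency_tables ev_table] by simp
  moreover have "?lab ` fst ?G \<subseteq> {1..r}"
    using ulim_in[OF finite_atLeastAtMost ev_lab] by blast
  moreover have "bounded_ultrametric (fst ?G) d ?\<delta>"
  proof (rule bounded_ultrametric_limit)
    show "\<forall>\<^sub>F i in filter_of U. bounded_ultrametric (fst (G i)) d (\<delta> i)"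
      using ev_model by eventually_elim (simp add: ultrametric_model_def)
  qed (use eventually_rep_in ultraproduct_eq_iff lim_\<delta> in auto)
  moreover have "snd ?G X Y \<longleftrightarrow> (?lab X, ?lab Y, ?\<delta> X Y) \<in> ulim S"
    if X: "X \<in> fst ?G" and Y: "Y \<in> fst ?G" for X Y
  proof -
    have "snd ?G X Y \<longleftrightarrow> (\<forall>\<^sub>F i in filter_of U. snd (G i) (rep X i) (rep Y i))"
      using X Y by (rule ultraproduct_edge_iff)
    also have "\<dots> \<longleftrightarrow> (\<forall>\<^sub>F i in filter_of U. (?lab X, ?lab Y, ?\<delta> X Y) \<in> ulim S)"
    proof (rule eventually_subst)
      from ev_model eventually_rep_in[OF X] eventually_rep_in[OF Y]
        lim_lab[OF X] lim_lab[OF Y] lim_\<delta>[OF X Y] lim_table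
      show "\<forall>\<^sub>F i in filter_of U.
              snd (G i) (rep X i) (rep Y i) \<longleftrightarrow> (?lab X, ?lab Y, ?\<delta> X Y) \<in> ulim S"
        by eventually_elim (simp add: ultrametric_model_def)
    qed
    finally show ?thesis by simp
  qed
  ultimately show ?thesis by (simp add: ultrametric_model_def)
qed

lemma in_TM_ultraproduct:
  assumes "\<forall>i\<in>I. in_TM r d (G i)"
  shows "in_TM r d (ultraproduct I U G)"
proof -
  from assms obtain lab \<delta> S where "\<And>i. i \<in> I \<Longrightarrow> ultrametric_model r d (G i) (lab i) (\<delta> i) (S i)"
    unfolding in_TM_iff_ultrametric_model by metis
  then have model: "ultrametric_model r d (ultraproduct I U G)
      (\<lambda>X. ulim (\<lambda>i. lab i (rep X i))) (\<lambda>X Y. ulim (\<lambda>i. \<delta> i (rep X i) (rep Y i))) (ulim S)"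
    by (rule ultrametric_model_ultraproduct)
  then have "is_graph (ultraproduct I U G)"
    using edge_ultraproduct_imp_vertices by (rule ultrametric_model_is_graph)
  then show ?thesis using model by (rule ultrametric_model_imp_in_TM)
qed

end

locale graph_ultrapower = graph_ultraproduct I U "\<lambda>_. H"
  for I :: "'i set" and U :: "'i set set" and H :: "'a graph"
begin

definition diag :: "'a \<Rightarrow> ('i \<Rightarrow> 'a) set" where
  "diag x = ultra_equiv I U (\<lambda>_. H) `` {\<lambda>i\<in>I. x}"

lemma diag_in: "x \<in> fst H \<Longrightarrow> diag x \<in> fst (ultraproduct I U (\<lambda>_. H))"
  unfolding diag_def vertices_ultraproduct by (rule quotientI) simp

lemma eventually_rep_diag:
  assumes "x \<in> fst H"
  shows "\<forall>\<^sub>F i in filter_of U. rep (diag x) i = x"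
proof -
  have "(\<lambda>i\<in>I. x) \<in> diag x"
    unfolding diag_def using assms by (intro equiv_class_self[OF equiv_ultra_equiv]) simp
  from eventually_eq_rep[OF diag_in[OF assms] this] eventually_mem_filter_of[OF ultrafilter_on_I]
  show ?thesis by eventually_elim simp
qed

lemma inj_on_diag: "inj_on diag (fst H)"
proof (rule inj_onI)
  fix x y assume x: "x \<in> fst H" and y: "y \<in> fst H" and "diag x = diag y"
  then have "\<forall>\<^sub>F i in filter_of U. rep (diag x) i = rep (diag y) i"
    using ultraproduct_eq_iff[OF diag_in[OF x] diag_in[OF y]] by simp
  with eventually_rep_diag[OF x] eventually_rep_diag[OF y]
  have "\<forall>\<^sub>F i in filter_of U. x = y" by eventually_elim metis
  then show "x = y" by simp
qed

lemma edge_diag_iff: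
  assumes x: "x \<in> fst H" and y: "y \<in> fst H"
  shows "snd H x y \<longleftrightarrow> snd (ultraproduct I U (\<lambda>_. H)) (diag x) (diag y)"
proof -
  have "\<forall>\<^sub>F i in filter_of U. snd H x y \<longleftrightarrow> snd H (rep (diag x) i) (rep (diag y) i)"
    using eventually_rep_diag[OF x] eventually_rep_diag[OF y] by eventually_elim simp
  then have "(\<forall>\<^sub>F i in filter_of U. snd H x y) \<longleftrightarrow>
      (\<forall>\<^sub>F i in filter_of U. snd H (rep (diag x) i) (rep (diag y) i))"
    by (rule eventually_subst)
  then show ?thesis using ultraproduct_edge_iff[OF diag_in[OF x] diag_in[OF y]] by simp
qed

lemma in_TM_ultraroot:
  assumes "is_graph H" and "in_TM r d (ultraproduct I U (\<lambda>_. H))"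
  shows "in_TM r d H"
proof -
  obtain lab \<delta> S where "ultrametric_model r d (ultraproduct I U (\<lambda>_. H)) lab \<delta> S"
    using assms(2) by (rule in_TM_imp_ultrametric_model)
  then have "ultrametric_model r d H (lab \<circ> diag) (\<lambda>x y. \<delta> (diag x) (diag y)) S"
    by (rule ultrametric_model_pullback) (use diag_in inj_on_diag edge_diag_iff in auto)
  with assms(1) show ?thesis by (rule ultrametric_model_imp_in_TM)
qed

end

theorem theorem2:
  fixes r d :: nat
  shows "(\<forall>(I :: 'i set) U (G :: 'i \<Rightarrow> 'a graph).
            ultrafilter_on I U \<and> (\<forall>i\<in>I. in_TM r d (G i)) \<longrightarrow> in_TM r d (ultraproduct I U G))
       \<and> (\<forall>(H :: 'b graph) (I :: 'j set) U.
            is_graph H \<and> ultrafilter_on I U \<and> in_TM r d (ultraproduct I U (\<lambda>_. H)) \<longrightarrow> in_TM r d H)"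
  using graph_ultraproduct.in_TM_ultraproduct graph_ultrapower.in_TM_ultraroot
  unfolding graph_ultrapower_def graph_ultraproduct_def by blast

end
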